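(* Let $(V,\nu)$ be a gauged space. Let $V_1=V\oplus\mathbb{R}$ (algebraic direct sum) and define $\nu_1(x,\lambda)=\max\{\nu(x)+\lambda,0\}$. Then $(V_1,\nu_1)$ is a gauged space and $\nu_1(x,0)=\nu(x)$ for all $x\in V$; consequently $x\mapsto(x,0)$ is an isometric order embedding of $(V,\|\cdot\|_\nu,V_{+,\nu})$ into $(V_1,\|\cdot\|_{\nu_1},(V_1)_{+})$, where $(V_1)_+=\ker\overline{\nu_1}$. Moreover, $(V_1,(V_1)_+)$ is an Archimedean order unit space with order unit $e=(0,1)$, and $\nu_1(x,\lambda)=\inf\{t>0:(x,\lambda)\le t(0,1)\}$ for all $(x,\lambda)\in V_1$.
   Context: A gauge on a real vector space $V$ is a map $\nu:V\to[0,\infty)$ with $\nu(x+y)\le\nu(x)+\nu(y)$ and $\nu(tx)=t\nu(x)$ for all $x,y\in V$, $t>0$; its conjugate is $\overline{\nu}(x)=\nu(-x)$. A gauge is proper if for every $x\neq0$, $\nu(x)\neq0$ or $\overline{\nu}(x)\neq0$; a gauged space is a pair $(V,\nu)$ with $\nu$ a proper gauge. The induced norm is $\|x\|_\nu=\max\{\nu(x),\overline{\nu}(x)\}$ and the induced (proper, closed) cone is $V_{+,\nu}=\ker\overline{\nu}$; $x\le y$ means $y-x$ lies in the cone. An order embedding is an injective linear map $\phi$ with $\phi(x)\ge0$ iff $x\ge0$. An ordered vector space $(V,V_+)$ (real vector space with proper cone) is an order unit space with order unit $e$ if for each $a\in V$ there is $t>0$ with $-te\le a\le te$; the order unit is Archimedean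 if ($te+a\ge0$ for all $t>0$) implies $a\ge 0$; an Archimedean order unit (AOU) space is an order unit space with Archimedean order unit. *)

theory Defs
  imports "HOL-Analysis.Analysis"
begin

definition gauge :: "('a::real_vector \<Rightarrow> real) \<Rightarrow> bool" where
  "gauge \<nu> \<longleftrightarrow> (\<forall>x. 0 \<le> \<nu> x) \<and> (\<forall>x y. \<nu> (x + y) \<le> \<nu> x + \<nu> y)
     \<and> (\<forall>t x. t > 0 \<longrightarrow> \<nu> (t *\<^sub>R x) = t * \<nu> x)"

definition conj_gauge :: "('a::real_vector \<Rightarrow> real) \<Rightarrow> 'a \<Rightarrow> real" where
  "conj_gauge \<nu> x = \<nu> (- x)"

definition proper_gauge :: "('a::real_vector \<Rightarrow> real) \<Rightarrow> bool" where
  "proper_gauge \<nu> \<longleftrightarrow> gauge \<nu> \<and> (\<forall>x. x \<noteq> 0 \<longrightarrow> \<nu> x \<noteq> 0 \<or> conj_gauge \<nu> x \<noteq> 0)"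

definition gauged_space :: "('a::real_vector \<Rightarrow> real) \<Rightarrow> bool" where
  "gauged_space \<nu> \<longleftrightarrow> proper_gauge \<nu>"

definition gauge_norm :: "('a::real_vector \<Rightarrow> real) \<Rightarrow> 'a \<Rightarrow> real" where
  "gauge_norm \<nu> x = max (\<nu> x) (conj_gauge \<nu> x)"

definition gauge_cone :: "('a::real_vector \<Rightarrow> real) \<Rightarrow> 'a set" where
  "gauge_cone \<nu> = {x. conj_gauge \<nu> x = 0}"

definition cone_le :: "'a::real_vector set \<Rightarrow> 'a \<Rightarrow> 'a \<Rightarrow> bool" where
  "cone_le C x y \<longleftrightarrow> y - x \<in> C"

definition order_embedding :: "'a::real_vector set \<Rightarrow> 'b::real_vector set \<Rightarrow> ('a \<Rightarrow> 'b) \<Rightarrow> bool" where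
  "order_embedding C D \<phi> \<longleftrightarrow> linear \<phi> \<and> inj \<phi> \<and>
     (\<forall>x. cone_le D 0 (\<phi> x) \<longleftrightarrow> cone_le C 0 x)"

definition proper_cone :: "'a::real_vector set \<Rightarrow> bool" where
  "proper_cone C \<longleftrightarrow> 0 \<in> C \<and> (\<forall>x\<in>C. \<forall>y\<in>C. x + y \<in> C) \<and>
     (\<forall>t x. 0 \<le> t \<longrightarrow> x \<in> C \<longrightarrow> t *\<^sub>R x \<in> C) \<and> (\<forall>x. x \<in> C \<longrightarrow> - x \<in> C \<longrightarrow> x = 0)"

definition ordered_vector_space :: "'a::real_vector set \<Rightarrow> bool" where
  "ordered_vector_space C \<longleftrightarrow> proper_cone C"

definition order_unit_space :: "'a::real_vector set \<Rightarrow> 'a \<Rightarrow> bool" where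
  "order_unit_space C e \<longleftrightarrow> ordered_vector_space C \<and>
     (\<forall>a. \<exists>t>0. cone_le C (- (t *\<^sub>R e)) a \<and> cone_le C a (t *\<^sub>R e))"

definition archimedean_unit :: "'a::real_vector set \<Rightarrow> 'a \<Rightarrow> bool" where
  "archimedean_unit C e \<longleftrightarrow> (\<forall>a. (\<forall>t>0. cone_le C 0 (t *\<^sub>R e + a)) \<longrightarrow> cone_le C 0 a)"

definition AOU_space :: "'a::real_vector set \<Rightarrow> 'a \<Rightarrow> bool" where
  "AOU_space C e \<longleftrightarrow> order_unit_space C e \<and> archimedean_unit C e"

end

theory Submission
  imports Defs
begin

text \<open>The positive cone of \<open>\<nu>\<^sub>1(x,\<lambda>) = max (\<nu> x + \<lambda>) 0\<close> is \<open>{(x,\<lambda>). \<nu>(-x) \<le> \<lambda>}\<close>. Hence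
  \<open>(x,\<lambda>) \<le> t(0,1)\<close> says exactly \<open>\<nu> x + \<lambda> \<le> t\<close>, which gives both the infimum formula and
  the order unit property, and the Archimedean property is the closedness of \<open>\<lambda> \<ge> \<nu>(-x)\<close>
  in \<open>\<lambda>\<close>. Since \<open>\<nu>\<^sub>1(x,0) = \<nu> x\<close>, the embedding \<open>x \<mapsto> (x,0)\<close> preserves the gauge and so
  both the cone and the norm.\<close>

definition unitization_gauge :: "('a::real_vector \<Rightarrow> real) \<Rightarrow> 'a \<times> real \<Rightarrow> real" where
  "unitization_gauge \<nu> = (\<lambda>(x, r). max (\<nu> x + r) 0)"

lemma unitization_gauge_apply [simp]: "unitization_gauge \<nu> (x, r) = max (\<nu> x + r) 0"
  by (simp add: unitization_gauge_def)

lemma gauge_nonneg: "gauge \<nu> \<Longrightarrow> 0 \<le> \<nu> x"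
  by (simp add: gauge_def)

lemma gauge_add_le: "gauge \<nu> \<Longrightarrow> \<nu> (x + y) \<le> \<nu> x + \<nu> y"
  by (simp add: gauge_def)

lemma gauge_scaleR: "gauge \<nu> \<Longrightarrow> 0 < t \<Longrightarrow> \<nu> (t *\<^sub>R x) = t * \<nu> x"
  by (simp add: gauge_def)

lemma gauge_zero: "gauge \<nu> \<Longrightarrow> \<nu> 0 = 0"
  using gauge_scaleR[of \<nu> 2 0] by simp

lemma proper_gauge_eq_zero:
  "proper_gauge \<nu> \<Longrightarrow> \<nu> x = 0 \<Longrightarrow> \<nu> (- x) = 0 \<Longrightarrow> x = 0"
  by (auto simp: proper_gauge_def conj_gauge_def)

lemma proper_cone_gauge_cone:
  assumes "proper_gauge \<nu>"
  shows "proper_cone (gauge_cone \<nu>)"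
proof -
  have \<nu>: "gauge \<nu>" using assms by (simp add: proper_gauge_def)
  have mem: "x \<in> gauge_cone \<nu> \<longleftrightarrow> \<nu> (- x) = 0" for x
    by (simp add: gauge_cone_def conj_gauge_def)
  have add: "x + y \<in> gauge_cone \<nu>" if "x \<in> gauge_cone \<nu>" "y \<in> gauge_cone \<nu>" for x y
    using that gauge_add_le[OF \<nu>, of "- x" "- y"] gauge_nonneg[OF \<nu>, of "- (x + y)"]
    by (simp add: mem add.commute)
  have scale: "t *\<^sub>R x \<in> gauge_cone \<nu>" if "0 \<le> t" "x \<in> gauge_cone \<nu>" for t x
    using that gauge_scaleR[OF \<nu>, of t "- x"] gauge_zero[OF \<nu>]
    by (cases "t = 0") (auto simp: mem)
  show ?thesis
    unfolding proper_cone_def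
    using add scale gauge_zero[OF \<nu>] proper_gauge_eq_zero[OF assms]
    by (auto simp: mem)
qed

lemma gauge_norm_comp:
  "(\<And>x. \<nu>' (\<phi> x) = \<nu> x) \<Longrightarrow> linear \<phi> \<Longrightarrow> gauge_norm \<nu>' (\<phi> x) = gauge_norm \<nu> x"
  by (simp add: gauge_norm_def conj_gauge_def linear_neg[symmetric])

lemma order_embedding_gauge_cone:
  assumes "\<And>x. \<nu>' (\<phi> x) = \<nu> x" and "linear \<phi>" and "inj \<phi>"
  shows "order_embedding (gauge_cone \<nu>) (gauge_cone \<nu>') \<phi>"
  using assms linear_neg[OF assms(2), symmetric]
  by (simp add: order_embedding_def cone_le_def gauge_cone_def conj_gauge_def linear_0)

lemma gauge_unitization_gauge:
  assumes "gauge \<nu>"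
  shows "gauge (unitization_gauge \<nu>)"
  unfolding gauge_def
proof (intro conjI allI impI)
  fix p q :: "'a \<times> real"
  show "0 \<le> unitization_gauge \<nu> p" by (cases p) simp
  show "unitization_gauge \<nu> (p + q) \<le> unitization_gauge \<nu> p + unitization_gauge \<nu> q"
    using gauge_add_le[OF assms, of "fst p" "fst q"] by (cases p, cases q) simp
next
  fix t :: real and p :: "'a \<times> real"
  assume t: "0 < t"
  obtain x r where p: "p = (x, r)" by (cases p)
  have "max (t * \<nu> x + t * r) 0 = t * max (\<nu> x + r) 0"
    using t by (simp add: max_def distrib_left[symmetric] mult_le_0_iff)
  then show "unitization_gauge \<nu> (t *\<^sub>R p) = t * unitization_gauge \<nu> p"
    using gauge_scaleR[OF assms t] by (simp add: p)
qed

lemma unitization_gauge_embed: "gauge \<nu> \<Longrightarrow> unitization_gauge \<nu> (x, 0) = \<nu> x"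
  by (simp add: gauge_nonneg)

lemma gauge_cone_unitization_gauge_iff:
  assumes "gauge \<nu>"
  shows "(x, r) \<in> gauge_cone (unitization_gauge \<nu>) \<longleftrightarrow> \<nu> (- x) \<le> r"
  using gauge_nonneg[OF assms, of "- x"] by (auto simp: gauge_cone_def conj_gauge_def)

lemma unitization_gauge_le_unit_iff:
  assumes "gauge \<nu>"
  shows "cone_le (gauge_cone (unitization_gauge \<nu>)) (x, r) (t *\<^sub>R (0, 1)) \<longleftrightarrow> \<nu> x + r \<le> t"
  by (auto simp: cone_le_def gauge_cone_unitization_gauge_iff[OF assms])

lemma proper_gauge_unitization_gauge:
  assumes "proper_gauge \<nu>"
  shows "proper_gauge (unitization_gauge \<nu>)"
proof -
  have \<nu>: "gauge \<nu>" using assms by (simp add: proper_gauge_def)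
  have "p = 0" if "unitization_gauge \<nu> p = 0" "unitization_gauge \<nu> (- p) = 0" for p
  proof -
    obtain x r where p: "p = (x, r)" by (cases p)
    have "\<nu> x + r \<le> 0" "\<nu> (- x) - r \<le> 0" using that by (auto simp: p)
    then have "\<nu> x = 0" "\<nu> (- x) = 0" "r = 0"
      using gauge_nonneg[OF \<nu>, of x] gauge_nonneg[OF \<nu>, of "- x"] by auto
    then show "p = 0" using proper_gauge_eq_zero[OF assms] by (simp add: p zero_prod_def)
  qed
  then show ?thesis
    using gauge_unitization_gauge[OF \<nu>] by (auto simp: proper_gauge_def conj_gauge_def)
qed

lemma order_unit_unitization_gauge:
  assumes "gauge \<nu>"
  shows "\<exists>t>0. cone_le (gauge_cone (unitization_gauge \<nu>)) (- (t *\<^sub>R (0, 1))) a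
              \<and> cone_le (gauge_cone (unitization_gauge \<nu>)) a (t *\<^sub>R (0, 1))"
proof -
  obtain x r where a: "a = (x, r)" by (cases a)
  define t where "t = \<nu> (- x) + \<nu> x + \<bar>r\<bar> + 1"
  have "0 < t" "\<nu> (- x) \<le> r + t" "\<nu> x + r \<le> t"
    using gauge_nonneg[OF assms, of x] gauge_nonneg[OF assms, of "- x"] unfolding t_def
    by linarith+
  then show ?thesis
    by (intro exI[of _ t])
       (simp add: a cone_le_def gauge_cone_unitization_gauge_iff[OF assms] add.commute)
qed

lemma archimedean_unit_unitization_gauge:
  assumes "gauge \<nu>"
  shows "archimedean_unit (gauge_cone (unitization_gauge \<nu>)) (0, 1)"
  unfolding archimedean_unit_def
proof (intro allI impI)
  fix a :: "'a \<times> real"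
  obtain x r where a: "a = (x, r)" by (cases a)
  assume "\<forall>t>0. cone_le (gauge_cone (unitization_gauge \<nu>)) 0 (t *\<^sub>R (0, 1) + a)"
  then have "\<nu> (- x) \<le> r + t" if "0 < t" for t
    using that by (auto simp: cone_le_def a gauge_cone_unitization_gauge_iff[OF assms] add.commute)
  then have "\<nu> (- x) \<le> r"
    by (metis add.commute field_le_epsilon)
  then show "cone_le (gauge_cone (unitization_gauge \<nu>)) 0 a"
    by (simp add: cone_le_def a gauge_cone_unitization_gauge_iff[OF assms])
qed

lemma AOU_space_unitization_gauge:
  assumes "proper_gauge \<nu>"
  shows "AOU_space (gauge_cone (unitization_gauge \<nu>)) (0, 1)"
proof -
  have \<nu>: "gauge \<nu>" using assms by (simp add: proper_gauge_def)
  show ?thesis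
    using proper_cone_gauge_cone[OF proper_gauge_unitization_gauge[OF assms]]
      order_unit_unitization_gauge[OF \<nu>] archimedean_unit_unitization_gauge[OF \<nu>]
    by (simp add: AOU_space_def order_unit_space_def ordered_vector_space_def)
qed

lemma unitization_gauge_eq_Inf:
  assumes "gauge \<nu>"
  shows "unitization_gauge \<nu> p
           = Inf {t. 0 < t \<and> cone_le (gauge_cone (unitization_gauge \<nu>)) p (t *\<^sub>R (0, 1))}"
proof -
  obtain x r where p: "p = (x, r)" by (cases p)
  have "{t. 0 < t \<and> cone_le (gauge_cone (unitization_gauge \<nu>)) p (t *\<^sub>R (0, 1))}
          = {t. 0 < t \<and> \<nu> x + r \<le> t}"
    using unitization_gauge_le_unit_iff[OF assms, of x r] by (simp add: p)
  also have "\<dots> = (if 0 < \<nu> x + r then {\<nu> x + r..} else {0<..})"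
    by auto
  finally show ?thesis
    by (simp add: p)
qed

theorem proposition2p12:
  fixes \<nu> :: "'a::real_vector \<Rightarrow> real"
    and \<nu>\<^sub>1 :: "'a \<times> real \<Rightarrow> real"
  assumes "gauged_space \<nu>"
    and "\<And>x r. \<nu>\<^sub>1 (x, r) = max (\<nu> x + r) 0"
  shows "gauged_space \<nu>\<^sub>1
    \<and> (\<forall>x. \<nu>\<^sub>1 (x, 0) = \<nu> x)
    \<and> (order_embedding (gauge_cone \<nu>) (gauge_cone \<nu>\<^sub>1) (\<lambda>x. (x, 0)))
    \<and> (\<forall>x. gauge_norm \<nu>\<^sub>1 (x, 0) = gauge_norm \<nu> x)
    \<and> (AOU_space (gauge_cone \<nu>\<^sub>1) (0, 1))
    \<and> (\<forall>p. \<nu>\<^sub>1 p = Inf {t. t > 0 \<and> cone_le (gauge_cone \<nu>\<^sub>1) p (t *\<^sub>R (0, 1))})"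
proof -
  have proper: "proper_gauge \<nu>" using assms(1) by (simp add: gauged_space_def)
  then have \<nu>: "gauge \<nu>" by (simp add: proper_gauge_def)
  have \<nu>\<^sub>1: "\<nu>\<^sub>1 = unitization_gauge \<nu>"
    by (rule ext) (auto simp: assms(2))
  have embed: "\<nu>\<^sub>1 (x, 0) = \<nu> x" for x
    using unitization_gauge_embed[OF \<nu>] by (simp add: \<nu>\<^sub>1)
  have "linear (\<lambda>x::'a. (x, 0::real))"
    by (rule linearI) (auto simp: scaleR_prod_def)
  moreover have "inj (\<lambda>x::'a. (x, 0::real))"
    by (auto intro: injI)
  ultimately show ?thesis
    using proper_gauge_unitization_gauge[OF proper] embed
      order_embedding_gauge_cone[of \<nu>\<^sub>1 "\<lambda>x. (x, 0)" \<nu>] gauge_norm_comp[of \<nu>\<^sub>1 "\<lambda>x. (x, 0)" \<nu>]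
      AOU_space_unitization_gauge[OF proper] unitization_gauge_eq_Inf[OF \<nu>]
    by (simp add: \<nu>\<^sub>1 gauged_space_def)
qed

end
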